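(* Let $w$ be a Chebyshev weight, $n,\nu\in\mathbb N$, and let $Q$ be a trigonometric polynomial of degree at most $\nu$ that is even or odd. Let $t_k^n=t_k^n(w)$, $k=1,\dots,n$, be as in the context, set $t_0^n:=0$ and $\Delta t_k^n:=t_k^n-t_{k-1}^n$. Then $$\sum_{k=1}^n|Q(t_k^n)|\,\Delta t_k^n\le\Big(1+\frac{2\pi\nu}{n_w}\Big)\int_0^\pi|Q(\tau)|\,d\tau.$$
   Context: Chebyshev weights: $w_1(x)=(1-x^2)^{-1/2}$, $w_2(x)=(1-x^2)^{1/2}$, $w_3(x)=\sqrt{(1+x)/(1-x)}$, $w_4(x)=\sqrt{(1-x)/(1+x)}$. Angles: $t_k^n=\frac{(2k-1)\pi}{2n}$ ($w=w_1$), $\frac{k\pi}{n+1}$ ($w=w_2$), $\frac{(2k-1)\pi}{2n+1}$ ($w=w_3$), $\frac{2k\pi}{2n+1}$ ($w=w_4$), $k=1,\dots,n$. $n_w=n$ if $w=w_1$, $n_w=n+1$ if $w=w_2$, $n_w=\frac{2n+1}{2}$ if $w\in\{w_3,w_4\}$. *)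

theory Defs
  imports "HOL-Analysis.Analysis"
begin

datatype cheb_weight = W1 | W2 | W3 | W4

definition cheb_weight_fun :: "cheb_weight \<Rightarrow> real \<Rightarrow> real" where
  "cheb_weight_fun w x = (case w of
      W1 \<Rightarrow> 1 / sqrt (1 - x^2)
    | W2 \<Rightarrow> sqrt (1 - x^2)
    | W3 \<Rightarrow> sqrt ((1 + x) / (1 - x))
    | W4 \<Rightarrow> sqrt ((1 - x) / (1 + x)))"

definition cheb_angle :: "cheb_weight \<Rightarrow> nat \<Rightarrow> nat \<Rightarrow> real" where
  "cheb_angle w n k = (if k = 0 then 0 else (case w of
      W1 \<Rightarrow> (2 * real k - 1) * pi / (2 * real n)
    | W2 \<Rightarrow> real k * pi / (real n + 1)
    | W3 \<Rightarrow> (2 * real k - 1) * pi / (2 * real n + 1)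
    | W4 \<Rightarrow> 2 * real k * pi / (2 * real n + 1)))"

definition cheb_nw :: "cheb_weight \<Rightarrow> nat \<Rightarrow> real" where
  "cheb_nw w n = (case w of
      W1 \<Rightarrow> real n
    | W2 \<Rightarrow> real n + 1
    | W3 \<Rightarrow> (2 * real n + 1) / 2
    | W4 \<Rightarrow> (2 * real n + 1) / 2)"

definition trig_poly_deg_le :: "nat \<Rightarrow> (real \<Rightarrow> real) \<Rightarrow> bool" where
  "trig_poly_deg_le \<nu> Q \<longleftrightarrow> (\<exists>a b :: nat \<Rightarrow> real.
      \<forall>t. Q t = a 0 + (\<Sum>j=1..\<nu>. a j * cos (real j * t) + b j * sin (real j * t)))"

end

theory Submission
  imports Defs
begin

(* Bernstein's inequality in L1, with constant 2 nu: pi Q' is the convolution of Q with the kernel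
   sin (nu y) |sum_{p<nu} e^{ipy}|^2, whose sine coefficient at each frequency j <= nu is j, and the
   kernel is dominated in absolute value by its nonnegative factor |sum_{p<nu} e^{ipy}|^2, of integral
   2 pi nu. On each cell [t_{k-1}, t_k], of length at most pi / n_w, |Q(t_k)| exceeds every value of
   |Q| on the cell by at most the integral of |Q'| over the cell. Summing over the cells and using
   Bernstein's inequality on [0, pi], available by the parity of Q, gives the bound. *)

lemma sin_cos_int_pi_symmetric:
  fixes k :: int and c :: real
  shows "sin (of_int k * pi + c) = sin (of_int k * (-pi) + c)"
    and "cos (of_int k * pi + c) = cos (of_int k * (-pi) + c)"
proof -
  have shift: "of_int k * pi + c = (of_int k * (-pi) + c) + 2 * pi * of_int k"
    by simp
  show "sin (of_int k * pi + c) = sin (of_int k * (-pi) + c)"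
    by (simp only: shift sin_add cos_int_2pin sin_int_2pin mult_1_right mult_zero_right add_0_right)
  show "cos (of_int k * pi + c) = cos (of_int k * (-pi) + c)"
    by (simp only: shift cos_add cos_int_2pin sin_int_2pin mult_1_right mult_zero_right diff_zero)
qed

lemma has_integral_sin_int_freq:
  fixes k :: int and c :: real
  shows "((\<lambda>u. sin (of_int k * u + c)) has_integral (if k = 0 then 2 * pi * sin c else 0)) {-pi..pi}"
proof (cases "k = 0")
  case False
  have "((\<lambda>u. sin (of_int k * u + c)) has_integral
      - cos (of_int k * pi + c) / of_int k - - cos (of_int k * (-pi) + c) / of_int k) {-pi..pi}"
    using False
    by (intro fundamental_theorem_of_calculus)
      (auto intro!: derivative_eq_intros simp: has_real_derivative_iff_has_vector_derivative[symmetric])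
  with False show ?thesis by (simp add: sin_cos_int_pi_symmetric)
qed (use has_integral_const_real[of "sin c" "-pi" pi] in simp)

lemma has_integral_cos_int_freq:
  fixes k :: int and c :: real
  shows "((\<lambda>u. cos (of_int k * u + c)) has_integral (if k = 0 then 2 * pi * cos c else 0)) {-pi..pi}"
proof (cases "k = 0")
  case False
  have "((\<lambda>u. cos (of_int k * u + c)) has_integral
      sin (of_int k * pi + c) / of_int k - sin (of_int k * (-pi) + c) / of_int k) {-pi..pi}"
    using False
    by (intro fundamental_theorem_of_calculus)
      (auto intro!: derivative_eq_intros simp: has_real_derivative_iff_has_vector_derivative[symmetric])
  with False show ?thesis by (simp add: sin_cos_int_pi_symmetric)
qed (use has_integral_const_real[of "cos c" "-pi" pi] in simp)

lemma has_integral_cos_mult_sin: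
  fixes j m :: nat and c :: real
  assumes "1 \<le> m"
  shows "((\<lambda>u. cos (real j * u) * sin (real m * u - c)) has_integral
      (if j = m then - pi * sin c else 0)) {-pi..pi}"
proof -
  have "cos (real j * u) * sin (real m * u - c) =
      sin (of_int (int m + int j) * u + - c) / 2 + sin (of_int (int m - int j) * u + - c) / 2" for u
  proof -
    have "cos y * sin x = sin (x + y) / 2 + sin (x - y) / 2" for x y :: real
      by (simp add: sin_add sin_diff field_simps)
    from this[where x = "real m * u - c" and y = "real j * u"] show ?thesis
      by (simp add: algebra_simps)
  qed
  moreover have "((\<lambda>u. sin (of_int (int m + int j) * u + - c) / 2 + sin (of_int (int m - int j) * u + - c) / 2)
      has_integral (if j = m then - pi * sin c else 0)) {-pi..pi}"
    using has_integral_add[OF has_integral_sin_int_freq[of "int m + int j" "- c", THEN has_integral_divide[where c = 2]]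
        has_integral_sin_int_freq[of "int m - int j" "- c", THEN has_integral_divide[where c = 2]]] assms
    by (cases "j = m") auto
  ultimately show ?thesis by simp
qed

lemma has_integral_sin_mult_sin:
  fixes j m :: nat and c :: real
  assumes "1 \<le> m"
  shows "((\<lambda>u. sin (real j * u) * sin (real m * u - c)) has_integral
      (if j = m then pi * cos c else 0)) {-pi..pi}"
proof -
  have "sin (real j * u) * sin (real m * u - c) =
      cos (of_int (int m - int j) * u + - c) / 2 - cos (of_int (int m + int j) * u + - c) / 2" for u
  proof -
    have "sin y * sin x = cos (x - y) / 2 - cos (x + y) / 2" for x y :: real
      by (simp add: cos_add cos_diff field_simps)
    from this[where x = "real m * u - c" and y = "real j * u"] show ?thesis
      by (simp add: algebra_simps)
  qed
  moreover have "((\<lambda>u. cos (of_int (int m - int j) * u + - c) / 2 - cos (of_int (int m + int j) * u + - c) / 2)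
      has_integral (if j = m then pi * cos c else 0)) {-pi..pi}"
    using has_integral_diff[OF has_integral_cos_int_freq[of "int m - int j" "- c", THEN has_integral_divide[where c = 2]]
        has_integral_cos_int_freq[of "int m + int j" "- c", THEN has_integral_divide[where c = 2]]] assms
    by (cases "j = m") auto
  ultimately show ?thesis by simp
qed

definition trig_poly :: "(nat \<Rightarrow> real) \<Rightarrow> (nat \<Rightarrow> real) \<Rightarrow> nat \<Rightarrow> real \<Rightarrow> real" where
  "trig_poly a b \<nu> u = a 0 + (\<Sum>j=1..\<nu>. a j * cos (real j * u) + b j * sin (real j * u))"

definition trig_poly_deriv :: "(nat \<Rightarrow> real) \<Rightarrow> (nat \<Rightarrow> real) \<Rightarrow> nat \<Rightarrow> real \<Rightarrow> real" where
  "trig_poly_deriv a b \<nu> u = (\<Sum>j=1..\<nu>. real j * (b j * cos (real j * u) - a j * sin (real j * u)))"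

lemma has_real_derivative_trig_poly:
  "(trig_poly a b \<nu> has_real_derivative trig_poly_deriv a b \<nu> x) (at x)"
  unfolding trig_poly_def[abs_def] trig_poly_deriv_def
  by (intro derivative_eq_intros) (auto intro!: sum.cong simp: algebra_simps)

lemma continuous_on_trig_poly [continuous_intros]:
  assumes "continuous_on S f"
  shows "continuous_on S (\<lambda>x. trig_poly a b \<nu> (f x))"
proof -
  have "continuous_on UNIV (trig_poly a b \<nu>)"
    by (rule has_real_derivative_imp_continuous_on) (rule has_real_derivative_trig_poly)
  then show ?thesis
    using assms by (rule continuous_on_compose2) auto
qed

lemma continuous_on_trig_poly_deriv [continuous_intros]:
  assumes "continuous_on S f"
  shows "continuous_on S (\<lambda>x. trig_poly_deriv a b \<nu> (f x))"
proof -
  have "continuous_on UNIV (trig_poly_deriv a b \<nu>)"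
    unfolding trig_poly_deriv_def[abs_def] by (intro continuous_intros)
  then show ?thesis
    using assms by (rule continuous_on_compose2) auto
qed

lemma has_integral_trig_poly_mult_sin:
  fixes m :: nat and c :: real
  assumes "1 \<le> m"
  shows "((\<lambda>u. trig_poly a b \<nu> u * sin (real m * u - c)) has_integral
      pi * (\<Sum>j=1..\<nu>. if j = m then b j * cos c - a j * sin c else 0)) {-pi..pi}"
proof -
  have "((\<lambda>u. a 0 * (cos (real 0 * u) * sin (real m * u - c)) +
      (\<Sum>j=1..\<nu>. a j * (cos (real j * u) * sin (real m * u - c)) + b j * (sin (real j * u) * sin (real m * u - c))))
    has_integral a 0 * 0 +
      (\<Sum>j=1..\<nu>. a j * (if j = m then - pi * sin c else 0) + b j * (if j = m then pi * cos c else 0))) {-pi..pi}"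
    using assms has_integral_cos_mult_sin[OF assms, of 0 c]
    by (intro has_integral_add has_integral_sum has_integral_mult_right
        has_integral_cos_mult_sin has_integral_sin_mult_sin) auto
  then show ?thesis
    by (simp add: trig_poly_def algebra_simps sum_distrib_left sum_distrib_right if_distrib cong: if_cong)
qed

definition fejer_sum :: "nat \<Rightarrow> real \<Rightarrow> real" where
  "fejer_sum \<nu> y = (\<Sum>p<\<nu>. \<Sum>q<\<nu>. cos ((real p - real q) * y))"

lemma fejer_sum_eq_sum_squares:
  "fejer_sum \<nu> y = (\<Sum>p<\<nu>. cos (real p * y))\<^sup>2 + (\<Sum>p<\<nu>. sin (real p * y))\<^sup>2"
  by (simp add: fejer_sum_def power2_eq_square sum_product cos_diff left_diff_distrib sum.distrib[symmetric])

lemma fejer_sum_nonneg: "0 \<le> fejer_sum \<nu> y"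
  unfolding fejer_sum_eq_sum_squares by simp

lemma continuous_on_fejer_sum [continuous_intros]:
  assumes "continuous_on S f"
  shows "continuous_on S (\<lambda>x. fejer_sum \<nu> (f x))"
proof -
  have "continuous_on UNIV (fejer_sum \<nu>)"
    unfolding fejer_sum_def[abs_def] by (intro continuous_intros)
  then show ?thesis
    using assms by (rule continuous_on_compose2) auto
qed

lemma has_integral_fejer_sum:
  "((\<lambda>x. fejer_sum \<nu> (u - x)) has_integral 2 * pi * real \<nu>) {-pi..pi}"
proof -
  have "((\<lambda>x. \<Sum>p<\<nu>. \<Sum>q<\<nu>. cos (of_int (int q - int p) * x + (real p - real q) * u))
      has_integral (\<Sum>p<\<nu>. \<Sum>q<\<nu>. if int q - int p = 0 then 2 * pi * cos ((real p - real q) * u) else 0))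
      {-pi..pi}"
    by (intro has_integral_sum has_integral_cos_int_freq finite_lessThan)
  moreover have "(\<Sum>p<\<nu>. \<Sum>q<\<nu>. if int q - int p = 0 then 2 * pi * cos ((real p - real q) * u) else 0)
      = 2 * pi * real \<nu>"
    by (simp add: sum.delta)
  ultimately show ?thesis
    unfolding fejer_sum_def by (simp add: algebra_simps)
qed

lemma sin_mult_fejer_sum:
  "sin (real \<nu> * y) * fejer_sum \<nu> y = (\<Sum>p<\<nu>. \<Sum>q<\<nu>. sin (real (\<nu> + p - q) * y))"
proof -
  have prod: "sin (real \<nu> * y) * cos ((real p - real q) * y)
      = sin ((real \<nu> + real p - real q) * y) / 2 + sin ((real \<nu> + real q - real p) * y) / 2" for p q
  proof -
    have "sin x * cos z = sin (x + z) / 2 + sin (x - z) / 2" for x z :: real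
      by (simp add: sin_add sin_diff field_simps)
    from this[where x = "real \<nu> * y" and z = "(real p - real q) * y"] show ?thesis
      by (simp add: algebra_simps)
  qed
  have "sin (real \<nu> * y) * fejer_sum \<nu> y
      = (\<Sum>p<\<nu>. \<Sum>q<\<nu>. sin ((real \<nu> + real p - real q) * y)) / 2
        + (\<Sum>p<\<nu>. \<Sum>q<\<nu>. sin ((real \<nu> + real q - real p) * y)) / 2"
    by (simp add: fejer_sum_def sum_distrib_left prod sum.distrib sum_divide_distrib)
  also have "(\<Sum>p<\<nu>. \<Sum>q<\<nu>. sin ((real \<nu> + real q - real p) * y))
      = (\<Sum>p<\<nu>. \<Sum>q<\<nu>. sin ((real \<nu> + real p - real q) * y))"
    by (rule sum.swap)
  also have "(\<Sum>p<\<nu>. \<Sum>q<\<nu>. sin ((real \<nu> + real p - real q) * y))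
      = (\<Sum>p<\<nu>. \<Sum>q<\<nu>. sin (real (\<nu> + p - q) * y))"
    by (intro sum.cong refl) (simp add: of_nat_diff)
  finally show ?thesis by simp
qed

lemma sum_lessThan_square_diagonals:
  fixes g :: "nat \<Rightarrow> 'a :: semiring_1"
  shows "(\<Sum>p<\<nu>. \<Sum>q<\<nu>. \<Sum>j=1..\<nu>. if j = \<nu> + p - q then g j else 0)
    = (\<Sum>j=1..\<nu>. of_nat j * g j)"
proof -
  have diagonal: "(\<Sum>p<\<nu>. \<Sum>q<\<nu>. if j = \<nu> + p - q then g j else 0) = of_nat j * g j"
    if j: "j \<in> {1..\<nu>}" for j
  proof -
    have "(\<Sum>q<\<nu>. if j = \<nu> + p - q then g j else 0) = (\<Sum>q<\<nu>. if q = \<nu> + p - j then g j else 0)" for p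
      using j by (intro sum.cong) auto
    then have "(\<Sum>p<\<nu>. \<Sum>q<\<nu>. if j = \<nu> + p - q then g j else 0) = (\<Sum>p<\<nu>. if p < j then g j else 0)"
      using j by (auto simp: sum.delta' intro!: sum.cong)
    also have "\<dots> = (\<Sum>p<j. g j)"
      using j by (intro sum.mono_neutral_cong_right) auto
    finally show ?thesis by simp
  qed
  have "(\<Sum>p<\<nu>. \<Sum>q<\<nu>. \<Sum>j=1..\<nu>. if j = \<nu> + p - q then g j else 0)
      = (\<Sum>j=1..\<nu>. \<Sum>p<\<nu>. \<Sum>q<\<nu>. if j = \<nu> + p - q then g j else 0)"
    by (simp only: sum.swap[of _ "{..<\<nu>}" "{1..\<nu>}"])
  then show ?thesis
    by (simp add: diagonal)
qed

lemma has_integral_trig_poly_mult_kernel: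
  "((\<lambda>u. trig_poly a b \<nu> u * (sin (real \<nu> * (u - x)) * fejer_sum \<nu> (u - x)))
     has_integral pi * trig_poly_deriv a b \<nu> x) {-pi..pi}"
proof -
  define c where "c j = b j * cos (real j * x) - a j * sin (real j * x)" for j
  have kernel: "trig_poly a b \<nu> u * (sin (real \<nu> * (u - x)) * fejer_sum \<nu> (u - x)) =
      (\<Sum>p<\<nu>. \<Sum>q<\<nu>. trig_poly a b \<nu> u * sin (real (\<nu> + p - q) * u - real (\<nu> + p - q) * x))" for u
    unfolding sin_mult_fejer_sum by (simp add: sum_distrib_left right_diff_distrib)
  have integral: "((\<lambda>u. \<Sum>p<\<nu>. \<Sum>q<\<nu>. trig_poly a b \<nu> u * sin (real (\<nu> + p - q) * u - real (\<nu> + p - q) * x))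
      has_integral (\<Sum>p<\<nu>. \<Sum>q<\<nu>. pi * (\<Sum>j=1..\<nu>. if j = \<nu> + p - q then c j else 0))) {-pi..pi}"
  proof (intro has_integral_sum finite_lessThan)
    fix p q
    assume "p \<in> {..<\<nu>}" "q \<in> {..<\<nu>}"
    then have "1 \<le> \<nu> + p - q" by auto
    from has_integral_trig_poly_mult_sin[OF this, of a b \<nu> "real (\<nu> + p - q) * x"]
    show "((\<lambda>u. trig_poly a b \<nu> u * sin (real (\<nu> + p - q) * u - real (\<nu> + p - q) * x))
        has_integral pi * (\<Sum>j=1..\<nu>. if j = \<nu> + p - q then c j else 0)) {-pi..pi}"
      by (simp add: c_def cong: if_cong)
  qed
  have total: "(\<Sum>p<\<nu>. \<Sum>q<\<nu>. pi * (\<Sum>j=1..\<nu>. if j = \<nu> + p - q then c j else 0))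
      = pi * trig_poly_deriv a b \<nu> x"
    by (simp only: sum_distrib_left[symmetric] sum_lessThan_square_diagonals) (simp add: trig_poly_deriv_def c_def)
  show ?thesis
    using integral unfolding kernel total .
qed

lemma integral_abs_trig_poly_deriv_le:
  "integral {-pi..pi} (\<lambda>x. \<bar>trig_poly_deriv a b \<nu> x\<bar>)
    \<le> 2 * real \<nu> * integral {-pi..pi} (\<lambda>u. \<bar>trig_poly a b \<nu> u\<bar>)"
proof -
  define G where "G x = integral {-pi..pi} (\<lambda>u. \<bar>trig_poly a b \<nu> u\<bar> * fejer_sum \<nu> (u - x))" for x
  have pointwise: "pi * \<bar>trig_poly_deriv a b \<nu> x\<bar> \<le> G x" for x
  proof -
    have "pi * \<bar>trig_poly_deriv a b \<nu> x\<bar> =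
        norm (integral {-pi..pi} (\<lambda>u. trig_poly a b \<nu> u * (sin (real \<nu> * (u - x)) * fejer_sum \<nu> (u - x))))"
      using has_integral_trig_poly_mult_kernel[of a b \<nu> x] by (simp add: integral_unique abs_mult)
    also have "\<dots> \<le> G x"
      unfolding G_def
    proof (rule integral_norm_bound_integral)
      fix u
      have "\<bar>sin (real \<nu> * (u - x))\<bar> * fejer_sum \<nu> (u - x) \<le> fejer_sum \<nu> (u - x)"
        using fejer_sum_nonneg by (intro mult_left_le_one_le) auto
      then show "norm (trig_poly a b \<nu> u * (sin (real \<nu> * (u - x)) * fejer_sum \<nu> (u - x)))
          \<le> \<bar>trig_poly a b \<nu> u\<bar> * fejer_sum \<nu> (u - x)"
        using fejer_sum_nonneg[of \<nu> "u - x"] by (simp add: abs_mult mult_left_mono)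
    qed (auto intro!: integrable_continuous_interval continuous_intros)
    finally show ?thesis .
  qed
  have continuous_G: "continuous_on {-pi..pi} G"
    unfolding G_def box_real(2)[symmetric]
    by (rule integral_continuous_on_param) (auto simp: split_beta intro!: continuous_intros)
  have "pi * integral {-pi..pi} (\<lambda>x. \<bar>trig_poly_deriv a b \<nu> x\<bar>) \<le> integral {-pi..pi} G"
    unfolding integral_mult_right[symmetric]
    by (intro integral_le pointwise integrable_continuous_interval continuous_G continuous_intros)
  also have "\<dots> = integral {-pi..pi} (\<lambda>u. integral {-pi..pi} (\<lambda>x. \<bar>trig_poly a b \<nu> u\<bar> * fejer_sum \<nu> (u - x)))"
    unfolding G_def box_real(2)[symmetric]
    by (rule integral_swap_continuous) (auto simp: split_beta intro!: continuous_intros)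
  also have "\<dots> = integral {-pi..pi} (\<lambda>u. \<bar>trig_poly a b \<nu> u\<bar> * (2 * pi * real \<nu>))"
    by (intro integral_cong integral_unique has_integral_mult_right has_integral_fejer_sum)
  also have "\<dots> = pi * (2 * real \<nu> * integral {-pi..pi} (\<lambda>u. \<bar>trig_poly a b \<nu> u\<bar>))"
    by (simp add: algebra_simps)
  finally show ?thesis
    by simp
qed

lemma integral_symmetric_even:
  fixes f :: "real \<Rightarrow> real"
  assumes "0 \<le> a" "continuous_on {-a..a} f" "\<And>x. f (- x) = f x"
  shows "integral {-a..a} f = 2 * integral {0..a} f"
proof -
  have "integral {-a..a} f = integral {-a..0} f + integral {0..a} f"
    using assms by (intro Henstock_Kurzweil_Integration.integral_combine[symmetric])
      (auto intro!: integrable_continuous_interval)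
  also have "integral {-a..0} f = integral {0..a} f"
    using Henstock_Kurzweil_Integration.integral_reflect_real[of a 0 f] assms(3) by simp
  finally show ?thesis
    by simp
qed

lemma abs_derivative_symmetric:
  fixes f f' :: "real \<Rightarrow> real"
  assumes "\<And>x. (f has_real_derivative f' x) (at x)"
    and "(\<forall>t. f (- t) = f t) \<or> (\<forall>t. f (- t) = - f t)"
  shows "\<bar>f' (- x)\<bar> = \<bar>f' x\<bar>"
proof -
  have reflected: "((\<lambda>t. f (- t)) has_real_derivative - f' (- x)) (at x)"
    using DERIV_chain2[OF assms(1) DERIV_minus[OF DERIV_ident]] by simp
  from assms(2) show ?thesis
  proof
    assume "\<forall>t. f (- t) = f t"
    with reflected have "(f has_real_derivative - f' (- x)) (at x)"
      by simp
    then show ?thesis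
      using DERIV_unique assms(1) by fastforce
  next
    assume "\<forall>t. f (- t) = - f t"
    with reflected have "((\<lambda>t. - f t) has_real_derivative - f' (- x)) (at x)"
      by simp
    then show ?thesis
      using DERIV_unique DERIV_minus[OF assms(1)] by fastforce
  qed
qed

lemma integral_abs_trig_poly_deriv_half_period_le:
  assumes "(\<forall>t. trig_poly a b \<nu> (- t) = trig_poly a b \<nu> t) \<or>
    (\<forall>t. trig_poly a b \<nu> (- t) = - trig_poly a b \<nu> t)"
  shows "integral {0..pi} (\<lambda>x. \<bar>trig_poly_deriv a b \<nu> x\<bar>)
    \<le> 2 * real \<nu> * integral {0..pi} (\<lambda>x. \<bar>trig_poly a b \<nu> x\<bar>)"
proof -
  have "integral {-pi..pi} (\<lambda>x. \<bar>trig_poly a b \<nu> x\<bar>)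
      = 2 * integral {0..pi} (\<lambda>x. \<bar>trig_poly a b \<nu> x\<bar>)"
    using assms by (intro integral_symmetric_even) (auto intro!: continuous_intros)
  moreover have "integral {-pi..pi} (\<lambda>x. \<bar>trig_poly_deriv a b \<nu> x\<bar>)
      = 2 * integral {0..pi} (\<lambda>x. \<bar>trig_poly_deriv a b \<nu> x\<bar>)"
    using abs_derivative_symmetric[OF has_real_derivative_trig_poly assms]
    by (intro integral_symmetric_even) (auto intro!: continuous_intros)
  ultimately show ?thesis
    using integral_abs_trig_poly_deriv_le[of a b \<nu>] by simp
qed

lemma length_mult_abs_le_integral:
  fixes f f' :: "real \<Rightarrow> real"
  assumes deriv: "\<And>x. (f has_real_derivative f' x) (at x)"
    and cont: "continuous_on UNIV f'" and "a \<le> c"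
  shows "(c - a) * \<bar>f c\<bar> \<le> integral {a..c} (\<lambda>t. \<bar>f t\<bar>) + (c - a) * integral {a..c} (\<lambda>t. \<bar>f' t\<bar>)"
proof -
  have integrable: "g integrable_on {x..y}" if "continuous_on UNIV g" for g :: "real \<Rightarrow> real" and x y
    using that by (intro integrable_continuous_interval) (rule continuous_on_subset, auto)
  have cont_abs: "continuous_on UNIV (\<lambda>t. \<bar>f t\<bar>)" "continuous_on UNIV (\<lambda>t. \<bar>f' t\<bar>)"
    using has_real_derivative_imp_continuous_on[OF deriv] cont by (auto intro!: continuous_intros)
  define H where "H = integral {a..c} (\<lambda>t. \<bar>f' t\<bar>)"
  have "\<bar>f c\<bar> \<le> \<bar>f s\<bar> + H" if s: "s \<in> {a..c}" for s
  proof -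
    have "(f' has_integral (f c - f s)) {s..c}"
      using s by (intro fundamental_theorem_of_calculus)
        (auto intro!: has_field_derivative_at_within deriv simp: has_real_derivative_iff_has_vector_derivative[symmetric])
    then have "\<bar>f c - f s\<bar> = norm (integral {s..c} f')"
      by (simp add: integral_unique)
    also have "\<dots> \<le> integral {s..c} (\<lambda>t. \<bar>f' t\<bar>)"
      by (rule integral_norm_bound_integral) (auto intro: integrable cont cont_abs)
    also have "\<dots> \<le> H"
      unfolding H_def using s by (intro integral_subset_le) (auto intro: integrable cont_abs)
    finally show ?thesis
      by linarith
  qed
  then have "integral {a..c} (\<lambda>s. \<bar>f c\<bar>) \<le> integral {a..c} (\<lambda>s. \<bar>f s\<bar> + H)"
    by (intro integral_le) (auto intro!: integrable continuous_intros cont_abs)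
  with \<open>a \<le> c\<close> show ?thesis
    by (simp add: H_def integral_add integrable cont_abs mult.commute)
qed

lemma sum_integral_consecutive:
  fixes f :: "real \<Rightarrow> real" and t :: "nat \<Rightarrow> real"
  assumes cont: "continuous_on UNIV f" and mono: "\<And>k. k < n \<Longrightarrow> t k \<le> t (Suc k)"
  shows "(\<Sum>k<n. integral {t k..t (Suc k)} f) = integral {t 0..t n} f"
  using mono
proof (induction n)
  case (Suc n)
  have "t 0 \<le> t m" if "m \<le> n" for m
    using that Suc.prems by (induction m) (auto intro: order_trans)
  then have "t 0 \<le> t n"
    by simp
  moreover have "f integrable_on {t 0..t (Suc n)}"
    by (intro integrable_continuous_interval continuous_on_subset[OF cont]) auto
  ultimately show ?case
    using Suc Henstock_Kurzweil_Integration.integral_combine[of "t 0" "t n" "t (Suc n)" f] by simp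
qed simp

lemma riemann_sum_abs_le_integral:
  fixes f f' :: "real \<Rightarrow> real" and t :: "nat \<Rightarrow> real"
  assumes deriv: "\<And>x. (f has_real_derivative f' x) (at x)" and cont: "continuous_on UNIV f'"
    and mono: "\<And>k. k < n \<Longrightarrow> t k \<le> t (Suc k)"
    and step: "\<And>k. k < n \<Longrightarrow> t (Suc k) - t k \<le> \<delta>"
    and bounds: "a \<le> t 0" "t n \<le> b" and "0 \<le> \<delta>"
  shows "(\<Sum>k<n. \<bar>f (t (Suc k))\<bar> * (t (Suc k) - t k))
    \<le> integral {a..b} (\<lambda>x. \<bar>f x\<bar>) + \<delta> * integral {a..b} (\<lambda>x. \<bar>f' x\<bar>)"
proof -
  have cont_abs: "continuous_on UNIV (\<lambda>x. \<bar>f x\<bar>)" "continuous_on UNIV (\<lambda>x. \<bar>f' x\<bar>)"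
    using has_real_derivative_imp_continuous_on[OF deriv] cont by (auto intro!: continuous_intros)
  have "(\<Sum>k<n. \<bar>f (t (Suc k))\<bar> * (t (Suc k) - t k))
      \<le> (\<Sum>k<n. integral {t k..t (Suc k)} (\<lambda>x. \<bar>f x\<bar>) + \<delta> * integral {t k..t (Suc k)} (\<lambda>x. \<bar>f' x\<bar>))"
  proof (rule sum_mono)
    fix k
    assume "k \<in> {..<n}"
    then have "t k \<le> t (Suc k)" "t (Suc k) - t k \<le> \<delta>"
      using mono step by auto
    moreover have "0 \<le> integral {t k..t (Suc k)} (\<lambda>x. \<bar>f' x\<bar>)"
      by (intro integral_nonneg integrable_continuous_interval continuous_on_subset[OF cont_abs(2)]) auto
    ultimately have "(t (Suc k) - t k) * integral {t k..t (Suc k)} (\<lambda>x. \<bar>f' x\<bar>)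
        \<le> \<delta> * integral {t k..t (Suc k)} (\<lambda>x. \<bar>f' x\<bar>)"
      by (intro mult_right_mono)
    then show "\<bar>f (t (Suc k))\<bar> * (t (Suc k) - t k)
        \<le> integral {t k..t (Suc k)} (\<lambda>x. \<bar>f x\<bar>) + \<delta> * integral {t k..t (Suc k)} (\<lambda>x. \<bar>f' x\<bar>)"
      using length_mult_abs_le_integral[OF deriv cont \<open>t k \<le> t (Suc k)\<close>]
      by (simp add: mult.commute)
  qed
  also have "\<dots> = integral {t 0..t n} (\<lambda>x. \<bar>f x\<bar>) + \<delta> * integral {t 0..t n} (\<lambda>x. \<bar>f' x\<bar>)"
    by (simp add: sum.distrib sum_distrib_left[symmetric]
        sum_integral_consecutive[of _ n t, OF cont_abs(1) mono]
        sum_integral_consecutive[of _ n t, OF cont_abs(2) mono])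
  also have "\<dots> \<le> integral {a..b} (\<lambda>x. \<bar>f x\<bar>) + \<delta> * integral {a..b} (\<lambda>x. \<bar>f' x\<bar>)"
    using bounds \<open>0 \<le> \<delta>\<close>
    by (intro add_mono mult_left_mono integral_subset_le)
      (auto intro!: integrable_continuous_interval continuous_on_subset[OF cont_abs(1)] continuous_on_subset[OF cont_abs(2)])
  finally show ?thesis .
qed

lemma cheb_nw_nonneg: "0 \<le> cheb_nw w n"
  by (cases w) (auto simp: cheb_nw_def)

lemma cheb_angle_Suc:
  assumes "1 \<le> k"
  shows "cheb_angle w n (Suc k) = cheb_angle w n k + pi / cheb_nw w n"
proof (cases w)
  case W1
  with assms show ?thesis
    by (cases "n = 0") (simp_all add: cheb_angle_def cheb_nw_def field_simps)
qed (use assms in \<open>simp_all add: cheb_angle_def cheb_nw_def add_divide_distrib[symmetric] algebra_simps\<close>)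

lemma cheb_angle_1_bounds: "0 \<le> cheb_angle w n 1 \<and> cheb_angle w n 1 \<le> pi / cheb_nw w n"
  by (cases w; cases "n = 0") (auto simp: cheb_angle_def cheb_nw_def field_simps)

lemma cheb_angle_step:
  shows "cheb_angle w n k \<le> cheb_angle w n (Suc k)"
    and "cheb_angle w n (Suc k) - cheb_angle w n k \<le> pi / cheb_nw w n"
proof -
  have "cheb_angle w n (Suc k) - cheb_angle w n k \<in> {0..pi / cheb_nw w n}"
    using cheb_nw_nonneg[of w n] cheb_angle_1_bounds[of w n] cheb_angle_Suc[of k w n]
    by (cases "k = 0") (auto simp: cheb_angle_def)
  then show "cheb_angle w n k \<le> cheb_angle w n (Suc k)"
    and "cheb_angle w n (Suc k) - cheb_angle w n k \<le> pi / cheb_nw w n"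
    by auto
qed

lemma cheb_angle_le_pi:
  assumes "k \<le> n"
  shows "cheb_angle w n k \<le> pi"
proof -
  have "x * pi / y \<le> pi" if "0 < y" "x \<le> y" for x y :: real
    using that by (simp add: pos_divide_le_eq)
  with assms show ?thesis
    by (cases w) (auto simp: cheb_angle_def)
qed

theorem lemma6p2:
  fixes w :: cheb_weight and n \<nu> :: nat and Q :: "real \<Rightarrow> real"
  assumes "n \<ge> 1"
    and "trig_poly_deg_le \<nu> Q"
    and "(\<forall>t. Q (- t) = Q t) \<or> (\<forall>t. Q (- t) = - Q t)"
  shows "(\<Sum>k=1..n. \<bar>Q (cheb_angle w n k)\<bar> * (cheb_angle w n k - cheb_angle w n (k - 1)))
         \<le> (1 + 2 * pi * real \<nu> / cheb_nw w n) * integral {0..pi} (\<lambda>\<tau>. \<bar>Q \<tau>\<bar>)"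
proof -
  obtain a b where "\<forall>t. Q t = a 0 + (\<Sum>j=1..\<nu>. a j * cos (real j * t) + b j * sin (real j * t))"
    using assms(2) unfolding trig_poly_deg_le_def by blast
  then have Q: "Q = trig_poly a b \<nu>"
    by (auto simp: trig_poly_def)
  define t where "t = cheb_angle w n"
  define \<delta> where "\<delta> = pi / cheb_nw w n"
  have "0 \<le> \<delta>"
    unfolding \<delta>_def using cheb_nw_nonneg by simp
  have "(\<Sum>k=1..n. \<bar>Q (t k)\<bar> * (t k - t (k - 1))) = (\<Sum>k<n. \<bar>Q (t (Suc k))\<bar> * (t (Suc k) - t k))"
    by (simp add: sum.atLeast1_atMost_eq)
  also have "\<dots> \<le> integral {0..pi} (\<lambda>x. \<bar>Q x\<bar>) + \<delta> * integral {0..pi} (\<lambda>x. \<bar>trig_poly_deriv a b \<nu> x\<bar>)"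
    unfolding Q t_def \<delta>_def
    by (rule riemann_sum_abs_le_integral[OF has_real_derivative_trig_poly])
      (auto simp: cheb_angle_step cheb_angle_le_pi cheb_nw_nonneg cheb_angle_def[of w n 0] intro!: continuous_intros)
  also have "\<dots> \<le> integral {0..pi} (\<lambda>x. \<bar>Q x\<bar>) + \<delta> * (2 * real \<nu> * integral {0..pi} (\<lambda>x. \<bar>Q x\<bar>))"
    using integral_abs_trig_poly_deriv_half_period_le[of a b \<nu>] assms(3) \<open>0 \<le> \<delta>\<close>
    unfolding Q by (simp add: mult_left_mono)
  also have "\<dots> = (1 + 2 * pi * real \<nu> / cheb_nw w n) * integral {0..pi} (\<lambda>x. \<bar>Q x\<bar>)"
    by (simp add: \<delta>_def algebra_simps)
  finally show ?thesis
    by (simp add: t_def)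
qed

end
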